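(* Let $m\ge 2$ and $d\ge 1$ be integers, $n=md$, $a,c>0$, and $q=\frac{ad}{2c}+1$. Let $G_R$ be the $m\times m$ matrix with entries $(G_R)_{kl}=-\frac{d}{2cm}|k-l|(m-|k-l|)$. Then $G_R^{-1}+\frac{a}{m}(mI_m-J_m)$ is invertible and $$M_R:=\Bigl(G_R^{-1}+\frac{a}{m}(mI_m-J_m)\Bigr)^{-1}=\mathrm{circ}(m_1,\dots,m_m),\qquad m_j=\frac{d\,[U_{j-2}(q)+U_{m-j}(q)]}{2c\,[T_m(q)-1]}-\frac{12c+ad(m^2-1)}{12acm},\quad j=1,\dots,m.$$
   Context: $\mathrm{circ}(m_1,\dots,m_m)$ denotes the $m\times m$ circulant matrix whose $(k,l)$ entry is $m_{((l-k)\bmod m)+1}$. $I_m$ is the identity, $J_m$ the all-ones matrix. $T_k,U_k$ are the Chebyshev polynomials of the first and second kind ($T_0=1,T_1=x,U_0=1,U_1=2x$, recurrence $p_{k+1}=2xp_k-p_{k-1}$), with the convention $U_{-1}=0$. ($G_R$ is invertible for $m\ge2$.) *)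

theory Defs
  imports Complex_Main "Jordan_Normal_Form.Matrix" "Jordan_Normal_Form.Gauss_Jordan_Elimination"
begin

fun chebT :: "nat \<Rightarrow> real \<Rightarrow> real" where
  "chebT 0 x = 1"
| "chebT (Suc 0) x = x"
| "chebT (Suc (Suc k)) x = 2 * x * chebT (Suc k) x - chebT k x"

fun chebU :: "nat \<Rightarrow> real \<Rightarrow> real" where
  "chebU 0 x = 1"
| "chebU (Suc 0) x = 2 * x"
| "chebU (Suc (Suc k)) x = 2 * x * chebU (Suc k) x - chebU k x"

text \<open>U with integer index and the convention U_{-1} = 0 (only k = -1 is used below).\<close>
definition chebU_int :: "int \<Rightarrow> real \<Rightarrow> real" where
  "chebU_int k x = (if k < 0 then 0 else chebU (nat k) x)"

definition J_mat :: "nat \<Rightarrow> real mat" where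
  "J_mat m = mat m m (\<lambda>_. 1)"

text \<open>circ(c_1,...,c_m): entry (k,l) (1-based) is c_{((l-k) mod m)+1}.
  With 0-based indices i,j the same formula applies since only j-i matters.\<close>
definition circ :: "nat \<Rightarrow> (nat \<Rightarrow> real) \<Rightarrow> real mat" where
  "circ m c = mat m m (\<lambda>(i,j). c (nat ((int j - int i) mod int m) + 1))"

end

theory Submission
  imports Defs "Jordan_Normal_Form.Determinant"
begin

text \<open>
  All matrices involved are circulant, so it suffices to compute cyclic convolutions of their
  first rows.  The first row of \<open>G\<^sub>R\<close> is the parabola \<open>s(m - s)\<close>, whose cyclic second
  difference is constant except at \<open>s = 0\<close>; hence \<open>G\<^sub>R\<^sup>-\<^sup>1\<close> is a multiple of the cycle Laplacian
  \<open>2I - P - P\<^sup>T\<close> (\<open>P\<close> the cyclic shift) minus a multiple of \<open>J\<close>, and adding \<open>(a/m)(mI - J)\<close>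
  only changes the coefficients.  The entries \<open>U\<^sub>j\<^sub>-\<^sub>2(q) + U\<^sub>m\<^sub>-\<^sub>j(q)\<close> satisfy the Chebyshev
  recurrence around the cycle except at \<open>j = 1\<close>, where the defect is \<open>2(T\<^sub>m(q) - 1)\<close>; summing
  the recurrence over a period gives \<open>(q - 1) \<Sum> = T\<^sub>m(q) - 1\<close>, which determines the constant part
  of \<open>m\<^sub>j\<close>.
\<close>

lemma sum_mod_shift:
  fixes f :: "int \<Rightarrow> 'a::comm_monoid_add"
  assumes "0 < n"
  shows "(\<Sum>s\<in>{0..<n}. f ((s + t) mod n)) = (\<Sum>s\<in>{0..<n}. f s)"
  by (rule sum.reindex_bij_witness[where i = "\<lambda>s. (s - t) mod n" and j = "\<lambda>s. (s + t) mod n"])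
     (use assms in \<open>auto simp: mod_simps\<close>)

lemma sum_mod_reflect:
  fixes f :: "int \<Rightarrow> 'a::comm_monoid_add"
  assumes "0 < n"
  shows "(\<Sum>s\<in>{0..<n}. f ((t - s) mod n)) = (\<Sum>s\<in>{0..<n}. f s)"
  by (rule sum.reindex_bij_witness[where i = "\<lambda>s. (t - s) mod n" and j = "\<lambda>s. (t - s) mod n"])
     (use assms in \<open>auto simp: mod_simps\<close>)

lemma sum_int_atLeastLessThan_eq:
  "(\<Sum>s\<in>{0..<int n}. f s) = (\<Sum>s<n. f (int s))"
proof -
  have "{0..<int n} = int ` {..<n}"
    using image_int_atLeastLessThan[of 0 n] by (simp add: atLeast0LessThan)
  then show ?thesis
    by (simp add: sum.reindex)
qed

lemma chebU_ge_one:
  assumes "x \<ge> 1"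
  shows "1 \<le> chebU k x \<and> chebU k x \<le> chebU (Suc k) x"
proof (induction k)
  case (Suc k)
  have "chebU (Suc k) x \<le> x * chebU (Suc k) x"
    using Suc assms by (simp add: mult_le_cancel_right1)
  moreover have "chebU (Suc (Suc k)) x = 2 * (x * chebU (Suc k) x) - chebU k x"
    by simp
  ultimately show ?case
    using Suc by linarith
qed (use assms in simp)

lemma chebU_int_nonneg: "x \<ge> 1 \<Longrightarrow> chebU_int k x \<ge> 0"
  using chebU_ge_one[of x "nat k"] by (auto simp: chebU_int_def)

lemma chebU_int_rec:
  assumes "k \<ge> 0"
  shows "chebU_int (k + 1) x + chebU_int (k - 1) x = 2 * x * chebU_int k x"
proof -
  obtain n where k: "k = int n" using assms nonneg_eq_int by blast
  show ?thesis
    by (cases n) (auto simp: k chebU_int_def nat_add_distrib)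
qed

lemma chebT_Suc_eq_chebU:
  "chebT (Suc n) x = x * chebU_int n x - chebU_int (int n - 1) x"
proof (induction n x rule: chebU.induct)
  case (3 k x)
  let ?u = "\<lambda>i. chebU_int i x"
  have u2: "?u (int (Suc (Suc k))) = 2 * x * ?u (int k + 1) - ?u k"
    using chebU_int_rec[of "int k + 1" x] by (simp add: algebra_simps)
  have u1: "?u (int (Suc (Suc k)) - 1) = ?u (int k + 1)"
    by (simp add: algebra_simps)
  have "chebT (Suc (Suc (Suc k))) x = 2 * x * chebT (Suc (Suc k)) x - chebT (Suc k) x"
    by simp
  also have "\<dots> = 2 * x * (x * ?u (int k + 1) - ?u k) - (x * ?u k - ?u (int k - 1))"
    by (simp only: 3) (simp add: algebra_simps)
  also have "\<dots> = x * (2 * x * ?u (int k + 1) - ?u k) - ?u (int k + 1)"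
    using chebU_int_rec[of "int k" x] by (simp add: algebra_simps)
  finally show ?case
    unfolding u1 u2 .
qed (simp_all add: chebU_int_def)

text \<open>The paper's \<open>U\<^sub>j\<^sub>-\<^sub>2(x) + U\<^sub>m\<^sub>-\<^sub>j(x)\<close> with 0-based index \<open>r = j - 1\<close>.\<close>

definition chebU_pair :: "nat \<Rightarrow> real \<Rightarrow> int \<Rightarrow> real" where
  "chebU_pair m x r = chebU_int (r - 1) x + chebU_int (int m - 1 - r) x"

lemma chebU_pair_second_difference:
  assumes "2 \<le> m" and "0 \<le> r" and "r < int m"
  shows "2 * x * chebU_pair m x r - chebU_pair m x ((r - 1) mod int m)
           - chebU_pair m x ((r + 1) mod int m)
         = (if r = 0 then 2 * (chebT m x - 1) else 0)"
proof (cases "r = 0")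
  case True
  have "chebT m x = x * chebU_int (int m - 1) x - chebU_int (int m - 2) x"
    using chebT_Suc_eq_chebU[of "m - 1" x] assms(1) by (simp add: of_nat_diff)
  moreover have "(-1) mod int m = int m - 1" and "1 mod int m = 1"
    using assms(1) by (simp_all add: zmod_minus1)
  then have "chebU_pair m x ((0 - 1) mod int m) = chebU_int (int m - 2) x + 1"
    and "chebU_pair m x ((0 + 1) mod int m) = 1 + chebU_int (int m - 2) x"
    and "chebU_pair m x 0 = chebU_int (int m - 1) x"
    by (simp_all add: chebU_pair_def chebU_int_def)
  ultimately show ?thesis
    using True by simp
next
  case False
  \<comment> \<open>wrapping around at \<open>r = m - 1\<close> is harmless: \<open>U\<^sub>-\<^sub>1 = 0\<close> makes the values at \<open>m\<close> and \<open>0\<close> agree\<close>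
  have next_eq: "chebU_pair m x ((r + 1) mod int m) = chebU_pair m x (r + 1)"
  proof (cases "r + 1 = int m")
    case True
    then show ?thesis by (simp add: chebU_pair_def chebU_int_def)
  qed (use assms in simp)
  have "(r - 1) mod int m = r - 1"
    using False assms by simp
  then have prev:
    "chebU_pair m x ((r - 1) mod int m) = chebU_int (r - 2) x + chebU_int (int m - r) x"
    by (simp add: chebU_pair_def)
  have succ: "chebU_pair m x ((r + 1) mod int m) = chebU_int r x + chebU_int (int m - 2 - r) x"
    by (subst next_eq) (simp add: chebU_pair_def algebra_simps)
  have "chebU_int r x = 2 * x * chebU_int (r - 1) x - chebU_int (r - 2) x"
    using chebU_int_rec[of "r - 1" x] False assms(2) by simp
  moreover have "chebU_int (int m - r) x
                 = 2 * x * chebU_int (int m - 1 - r) x - chebU_int (int m - 2 - r) x"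
    using chebU_int_rec[of "int m - 1 - r" x] assms(3) by (simp add: algebra_simps)
  ultimately show ?thesis
    using False unfolding prev succ chebU_pair_def[of m x r] by (simp add: algebra_simps)
qed

lemma chebU_pair_sum:
  assumes "2 \<le> m"
  shows "(x - 1) * (\<Sum>r\<in>{0..<int m}. chebU_pair m x r) = chebT m x - 1"
proof -
  let ?F = "chebU_pair m x" and ?S = "\<Sum>r\<in>{0..<int m}. chebU_pair m x r"
  have m: "0 < int m" using assms by simp
  have "2 * x * ?S - ?S - ?S
        = (\<Sum>r\<in>{0..<int m}. 2 * x * ?F r - ?F ((r - 1) mod int m) - ?F ((r + 1) mod int m))"
    using sum_mod_shift[OF m, of ?F "-1"] sum_mod_shift[OF m, of ?F 1]
    by (simp add: sum_subtractf sum_distrib_left)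
  also have "\<dots> = (\<Sum>r\<in>{0..<int m}. if r = 0 then 2 * (chebT m x - 1) else 0)"
    using assms by (intro sum.cong) (auto simp: chebU_pair_second_difference)
  also have "\<dots> = 2 * (chebT m x - 1)"
    using m by simp
  finally show ?thesis
    by (simp add: algebra_simps)
qed

lemma chebT_gt_one:
  assumes "x > 1" and "2 \<le> m"
  shows "chebT m x > 1"
proof -
  let ?F = "chebU_pair m x"
  have "?F 0 \<ge> 1"
    using chebU_ge_one[of x "m - 1"] assms by (simp add: chebU_pair_def chebU_int_def nat_diff_distrib)
  moreover have "?F 0 \<le> (\<Sum>r\<in>{0..<int m}. ?F r)"
    using assms by (intro member_le_sum)
      (auto simp: chebU_pair_def intro!: add_nonneg_nonneg chebU_int_nonneg)
  ultimately have "(x - 1) * (\<Sum>r\<in>{0..<int m}. ?F r) > 0"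
    using assms(1) by simp
  then show ?thesis
    using chebU_pair_sum[OF assms(2)] by simp
qed

definition circulant :: "nat \<Rightarrow> (int \<Rightarrow> 'a) \<Rightarrow> 'a mat" where
  "circulant m v = mat m m (\<lambda>(i, j). v ((int j - int i) mod int m))"

definition cyclic_convolution :: "nat \<Rightarrow> (int \<Rightarrow> 'a::comm_semiring_0) \<Rightarrow> (int \<Rightarrow> 'a) \<Rightarrow> int \<Rightarrow> 'a"
  where "cyclic_convolution m u v r = (\<Sum>s\<in>{0..<int m}. u s * v ((r - s) mod int m))"

lemma circulant_carrier [simp]: "circulant m v \<in> carrier_mat m m"
  by (simp add: circulant_def)

lemma dim_row_circulant [simp]: "dim_row (circulant m v) = m"
  and dim_col_circulant [simp]: "dim_col (circulant m v) = m"
  by (simp_all add: circulant_def)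

lemma circulant_index [simp]:
  "i < m \<Longrightarrow> j < m \<Longrightarrow> circulant m v $$ (i, j) = v ((int j - int i) mod int m)"
  by (simp add: circulant_def)

lemma mod_diff_eq_0_iff:
  fixes i j m :: nat
  assumes "i < m" and "j < m"
  shows "(int j - int i) mod int m = 0 \<longleftrightarrow> i = j"
proof
  assume "(int j - int i) mod int m = 0"
  then have "int j mod int m = int i mod int m"
    by (simp add: mod_eq_dvd_iff mod_eq_0_iff_dvd)
  with assms show "i = j" by simp
qed simp

lemma circulant_cong:
  assumes "\<And>r. 0 \<le> r \<Longrightarrow> r < int m \<Longrightarrow> u r = v r"
  shows "circulant m u = circulant m v"
  using assms by (intro eq_matI) auto

lemma one_mat_eq_circulant: "1\<^sub>m m = circulant m (\<lambda>r. if r = 0 then 1 else 0)"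
  by (intro eq_matI) (auto simp: mod_diff_eq_0_iff)

lemma J_mat_eq_circulant: "J_mat m = circulant m (\<lambda>_. 1)"
  by (intro eq_matI) (auto simp: J_mat_def)

lemma circulant_add: "circulant m u + circulant m v = circulant m (\<lambda>r. u r + v r)"
  by (intro eq_matI) auto

lemma circulant_minus: "circulant m u - circulant m v = circulant m (\<lambda>r. u r - v r)"
  by (intro eq_matI) auto

lemma smult_circulant: "a \<cdot>\<^sub>m circulant m v = circulant m (\<lambda>r. a * v r)"
  by (intro eq_matI) auto

lemma circulant_mult:
  fixes u v :: "int \<Rightarrow> 'a::comm_semiring_0"
  shows "circulant m u * circulant m v = circulant m (cyclic_convolution m u v)"
proof (rule eq_matI)
  fix i k assume "i < dim_row (circulant m (cyclic_convolution m u v))"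
    and "k < dim_col (circulant m (cyclic_convolution m u v))"
  then have i: "i < m" and k: "k < m" by auto
  then have m: "0 < int m" by simp
  let ?h = "\<lambda>l. u ((l - int i) mod int m) * v ((int k - l) mod int m)"
  have "(circulant m u * circulant m v) $$ (i, k) = (\<Sum>l<m. ?h (int l))"
    using i k by (simp add: scalar_prod_def atLeast0LessThan)
  also have "\<dots> = (\<Sum>s\<in>{0..<int m}. ?h ((s + int i) mod int m))"
    using sum_mod_shift[OF m, of ?h "int i"] by (simp add: sum_int_atLeastLessThan_eq)
  also have "\<dots> = (\<Sum>s\<in>{0..<int m}. u s * v (((int k - int i) mod int m - s) mod int m))"
    by (intro sum.cong) (auto simp: mod_simps algebra_simps)
  also have "\<dots> = circulant m (cyclic_convolution m u v) $$ (i, k)"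
    using i k by (simp add: cyclic_convolution_def)
  finally show "(circulant m u * circulant m v) $$ (i, k)
                = circulant m (cyclic_convolution m u v) $$ (i, k)" .
qed auto

lemma circ_eq_circulant: "circ m c = circulant m (\<lambda>r. c (nat r + 1))"
  by (simp add: circ_def circulant_def)

lemma mat_dist_eq_circulant:
  assumes "\<And>t. f (real m - t) = f t"
  shows "mat m m (\<lambda>(k, l). f (real (nat \<bar>int k - int l\<bar>))) = circulant m (\<lambda>s. f (of_int s))"
proof (rule eq_matI)
  fix k l
  assume "k < dim_row (circulant m (\<lambda>s. f (of_int s)))"
    and "l < dim_col (circulant m (\<lambda>s. f (of_int s)))"
  then have k: "k < m" and l: "l < m" by auto
  show "mat m m (\<lambda>(k, l). f (real (nat \<bar>int k - int l\<bar>))) $$ (k, l)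
        = circulant m (\<lambda>s. f (of_int s)) $$ (k, l)"
  proof (cases "k \<le> l")
    case True
    then have "(int l - int k) mod int m = int l - int k"
      using l by simp
    with True k l show ?thesis by (simp add: of_nat_diff)
  next
    case False
    have "(int l - int k) mod int m = (int l - int k + int m) mod int m"
      by simp
    also have "\<dots> = int l - int k + int m"
      using False k by (intro mod_pos_pos_trivial) auto
    finally have "real_of_int ((int l - int k) mod int m) = real m - (real k - real l)"
      by simp
    moreover have "real (nat \<bar>int k - int l\<bar>) = real k - real l"
      using False by simp
    ultimately show ?thesis
      using k l assms[of "real k - real l"] by simp
  qed
qed auto

lemma mat_inverse_eqI:
  fixes A B :: "'a::field mat"
  assumes A: "A \<in> carrier_mat n n" and B: "B \<in> carrier_mat n n" and AB: "A * B = 1\<^sub>m n"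
  shows "mat_inverse A = Some B"
proof -
  have BA: "B * A = 1\<^sub>m n"
    by (rule mat_mult_left_right_inverse[OF A B AB])
  then have "A \<in> Units (ring_mat TYPE('a) n undefined)"
    using A B AB by (auto simp: Units_def ring_mat_def)
  then have "mat_inverse A \<noteq> None"
    using mat_inverse(1)[OF A, of undefined] by auto
  then obtain B' where B': "mat_inverse A = Some B'"
    by blast
  then have B'A: "B' * A = 1\<^sub>m n" and B'_carrier: "B' \<in> carrier_mat n n"
    using mat_inverse(2)[OF A] by auto
  have "B' = B' * (A * B)"
    using AB B'_carrier by simp
  also have "\<dots> = B"
    using assoc_mult_mat[OF B'_carrier A B] B'A B by simp
  finally show ?thesis
    using B' by simp
qed

text \<open>
  First row of \<open>x\<^sub>0 I + x\<^sub>1 (P + P\<^sup>T) + y J\<close>.  The two \<open>x\<^sub>1\<close> terms are added rather than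
  combined by a disjunction, so that for \<open>m = 2\<close>, where \<open>P = P\<^sup>T\<close>, the entry at \<open>1\<close> is \<open>2 x\<^sub>1\<close>.
\<close>

definition cyclic_stencil :: "nat \<Rightarrow> 'a::comm_ring_1 \<Rightarrow> 'a \<Rightarrow> 'a \<Rightarrow> int \<Rightarrow> 'a" where
  "cyclic_stencil m x0 x1 y r =
     (if r = 0 then x0 else 0) + (if r = 1 then x1 else 0) + (if r = int m - 1 then x1 else 0) + y"

lemma cyclic_convolution_stencil:
  fixes v :: "int \<Rightarrow> 'a::comm_ring_1"
  assumes "2 \<le> m"
  shows "cyclic_convolution m (cyclic_stencil m x0 x1 y) v r
         = x0 * v (r mod int m) + x1 * (v ((r - 1) mod int m) + v ((r + 1) mod int m))
           + y * (\<Sum>s\<in>{0..<int m}. v s)"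
proof -
  have m: "0 < int m" "1 < int m" using assms by simp_all
  have "(r - (int m - 1)) mod int m = (r + 1) mod int m"
    by (simp add: mod_simps algebra_simps)
  moreover have "\<And>P a b. (if P then a else 0) * b = (if P then a * b else (0::'a))"
    by simp
  ultimately show ?thesis
    using m sum_mod_reflect[OF m(1), of v r]
    unfolding cyclic_convolution_def cyclic_stencil_def distrib_right sum.distrib
    by (simp add: sum_distrib_left[symmetric] distrib_left)
qed

lemma circulant_stencil_add_centering:
  fixes b :: real
  shows "circulant m (cyclic_stencil m x0 x1 y) + b \<cdot>\<^sub>m (real m \<cdot>\<^sub>m 1\<^sub>m m - J_mat m)
         = circulant m (cyclic_stencil m (x0 + b * m) x1 (y - b))"
  unfolding one_mat_eq_circulant J_mat_eq_circulant smult_circulant circulant_minus circulant_add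
  by (rule circulant_cong) (simp add: cyclic_stencil_def algebra_simps)

lemma sq_minus_one_pos: "2 \<le> m \<Longrightarrow> real m ^ 2 - 1 > 0"
  using power_mono[of 2 "real m" 2] by simp

lemma sum_mult_complement:
  "(\<Sum>s<n. real s * (M - real s))
   = M * real n * (real n - 1) / 2 - (real n - 1) * real n * (2 * real n - 1) / 6"
  by (induction n) (simp_all add: field_simps power2_eq_square)

lemma sum_parabola:
  "(\<Sum>s\<in>{0..<int m}. of_int s * (real m - of_int s)) = real m * (real m ^ 2 - 1) / 6"
proof -
  have "(\<Sum>s\<in>{0..<int m}. of_int s * (real m - of_int s)) = (\<Sum>s<m. real s * (real m - real s))"
    by (simp add: sum_int_atLeastLessThan_eq)
  also have "\<dots> = real m * (real m ^ 2 - 1) / 6"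
    unfolding sum_mult_complement by (simp add: field_simps power2_eq_square)
  finally show ?thesis .
qed

lemma parabola_cyclic_second_difference:
  fixes m :: nat and r :: int
  assumes "2 \<le> m" and "0 \<le> r" and "r < int m"
  defines "p \<equiv> \<lambda>s::int. of_int s * (real m - of_int s)"
  shows "2 * p r - p ((r - 1) mod int m) - p ((r + 1) mod int m)
         = (if r = 0 then 2 - 2 * real m else 2)"
proof (cases "r = 0")
  case True
  have "(-1) mod int m = int m - 1" and "1 mod int m = 1"
    using assms(1) by (simp_all add: zmod_minus1)
  with True show ?thesis
    by (simp add: p_def)
next
  case False
  have "p ((r + 1) mod int m) = p (r + 1)"
    using assms by (cases "r + 1 = int m") (simp_all add: p_def)
  moreover have "p ((r - 1) mod int m) = p (r - 1)"
    using False assms by simp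
  ultimately show ?thesis
    using False by (simp add: p_def algebra_simps)
qed

lemma circulant_stencil_mult_parabola:
  fixes c d :: real
  assumes m: "2 \<le> m" and "c \<noteq> 0" and "d \<noteq> 0"
  shows "circulant m (cyclic_stencil m (2 * c / d) (- (c / d)) (- (12 * c / (d * m * (real m ^ 2 - 1)))))
           * circulant m (\<lambda>s. - (d / (2 * c * m)) * of_int s * (real m - of_int s))
         = 1\<^sub>m m"
proof -
  define p where "p = (\<lambda>s::int. of_int s * (real m - of_int s))"
  have "real m ^ 2 - 1 \<noteq> 0"
    using sq_minus_one_pos[OF m] by simp
  have "cyclic_convolution m (cyclic_stencil m (2 * c / d) (- (c / d)) (- (12 * c / (d * m * (real m ^ 2 - 1)))))
          (\<lambda>s. - (d / (2 * c * m)) * p s) r = (if r = 0 then 1 else 0)"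
    if r: "0 \<le> r" "r < int m" for r
  proof -
    have "2 * p r - p ((r - 1) mod int m) - p ((r + 1) mod int m)
          = (if r = 0 then 2 - 2 * real m else 2)"
      unfolding p_def by (rule parabola_cyclic_second_difference[OF m r])
    moreover have sum_p: "(\<Sum>s\<in>{0..<int m}. p s) = real m * (real m ^ 2 - 1) / 6"
      unfolding p_def by (rule sum_parabola)
    ultimately show ?thesis
      using r m assms(2,3) \<open>real m ^ 2 - 1 \<noteq> 0\<close>
      unfolding cyclic_convolution_stencil[OF m] sum_distrib_left[symmetric] sum_p
      by (simp add: field_simps)
  qed
  moreover have "(\<lambda>s. - (d / (2 * c * m)) * of_int s * (real m - of_int s))
                 = (\<lambda>s. - (d / (2 * c * m)) * p s)"
    by (simp add: p_def mult.assoc)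
  ultimately show ?thesis
    unfolding circulant_mult one_mat_eq_circulant by (auto intro: circulant_cong)
qed

lemma cyclic_convolution_stencil_chebU_pair:
  fixes a c d q :: real
  assumes m: "2 \<le> m" and a: "a > 0" and c: "c > 0" and d: "d > 0"
    and q: "q = a * d / (2 * c) + 1"
    and v: "\<And>r. 0 \<le> r \<Longrightarrow> r < int m \<Longrightarrow>
              v r = d / (2 * c * (chebT m q - 1)) * chebU_pair m q r
                    - (12 * c + a * d * (real m ^ 2 - 1)) / (12 * a * c * m)"
    and r: "0 \<le> r" "r < int m"
  defines "\<gamma> \<equiv> 12 * c / (d * m * (real m ^ 2 - 1))"
  shows "cyclic_convolution m (cyclic_stencil m (2 * c / d + a) (- (c / d)) (- \<gamma> - a / m)) v r
         = (if r = 0 then 1 else 0)"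
proof -
  let ?F = "chebU_pair m q" and ?T = "chebT m q"
  define K where "K = d / (2 * c * (?T - 1))"
  define C where "C = - ((12 * c + a * d * (real m ^ 2 - 1)) / (12 * a * c * m))"
  have q1: "q - 1 = a * d / (2 * c)"
    using q by simp
  have "q > 1"
    using q a c d by simp
  then have T: "?T - 1 > 0"
    using chebT_gt_one[OF _ m] by simp
  have v': "v s = K * ?F s + C" if "0 \<le> s" "s < int m" for s
    using v[OF that] by (simp add: K_def C_def)
  have "(\<Sum>s\<in>{0..<int m}. v s) = K * (\<Sum>s\<in>{0..<int m}. ?F s) + m * C"
    by (simp add: v' sum.distrib sum_distrib_left)
  also have "K * (\<Sum>s\<in>{0..<int m}. ?F s) = 1 / a"
    using chebU_pair_sum[OF m, of q] T a c d unfolding q1 by (simp add: K_def field_simps)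
  finally have sum_v: "(\<Sum>s\<in>{0..<int m}. v s) = 1 / a + m * C" .
  have lap: "2 * ?F r - ?F ((r - 1) mod int m) - ?F ((r + 1) mod int m)
             = (if r = 0 then 2 * (?T - 1) else 0) - (2 * q - 2) * ?F r"
    using chebU_pair_second_difference[OF m r, of q] by (simp add: algebra_simps)
  have "cyclic_convolution m (cyclic_stencil m (2 * c / d + a) (- (c / d)) (- \<gamma> - a / m)) v r
        = c / d * K * (2 * ?F r - ?F ((r - 1) mod int m) - ?F ((r + 1) mod int m))
          + a * K * ?F r + a * C - (\<gamma> + a / m) * (\<Sum>s\<in>{0..<int m}. v s)"
    using r m by (simp add: cyclic_convolution_stencil[OF m] v' algebra_simps)
  also have "\<dots> = c / d * K * (if r = 0 then 2 * (?T - 1) else 0)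
                  + (a - c / d * (2 * q - 2)) * K * ?F r
                  + (a * C - (\<gamma> + a / m) * (1 / a + m * C))"
    unfolding lap sum_v by (simp add: algebra_simps)
  also have "a - c / d * (2 * q - 2) = 0"
    using q1 c d by (simp add: field_simps)
  also have "a * C - (\<gamma> + a / m) * (1 / a + m * C) = 0"
  proof -
    have "real m ^ 2 - 1 \<noteq> 0"
      using sq_minus_one_pos[OF m] by simp
    then show ?thesis
      using a c d m by (simp add: \<gamma>_def C_def field_simps)
  qed
  moreover have "c / d * K * (2 * (?T - 1)) = 1"
    using T c d by (simp add: K_def field_simps)
  ultimately show ?thesis
    using T c by auto
qed

lemma circulant_stencil_mult_chebU_pair:
  fixes a c d q :: real
  assumes "2 \<le> m" and "a > 0" and "c > 0" and "d > 0"
    and "q = a * d / (2 * c) + 1"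
    and "\<And>r. 0 \<le> r \<Longrightarrow> r < int m \<Longrightarrow>
           v r = d / (2 * c * (chebT m q - 1)) * chebU_pair m q r
                 - (12 * c + a * d * (real m ^ 2 - 1)) / (12 * a * c * m)"
  shows "circulant m (cyclic_stencil m (2 * c / d + a) (- (c / d))
             (- (12 * c / (d * m * (real m ^ 2 - 1))) - a / m)) * circulant m v
         = 1\<^sub>m m"
  unfolding circulant_mult one_mat_eq_circulant
  by (rule circulant_cong) (rule cyclic_convolution_stencil_chebU_pair[OF assms])

theorem lemma4p2:
  fixes m d :: nat and a c :: real
  assumes "m \<ge> 2" and "d \<ge> 1" and "a > 0" and "c > 0"
  defines "q \<equiv> a * real d / (2 * c) + 1"
  defines "G \<equiv> mat m m (\<lambda>(k,l). - (real d / (2 * c * real m)) *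
                 real (nat \<bar>int k - int l\<bar>) * (real m - real (nat \<bar>int k - int l\<bar>)))"
  defines "mR \<equiv> (\<lambda>j::nat. real d * (chebU_int (int j - 2) q + chebU_int (int m - int j) q)
                      / (2 * c * (chebT m q - 1))
                 - (12 * c + a * real d * (real m ^ 2 - 1)) / (12 * a * c * real m))"
  shows "\<exists>Ginv. mat_inverse G = Some Ginv \<and>
           mat_inverse (Ginv + (a / real m) \<cdot>\<^sub>m (real m \<cdot>\<^sub>m 1\<^sub>m m - J_mat m)) = Some (circ m mR)"
proof -
  have d: "real d > 0" using assms(2) by simp
  define \<gamma> where "\<gamma> = 12 * c / (real d * m * (real m ^ 2 - 1))"
  define Ginv where "Ginv = circulant m (cyclic_stencil m (2 * c / d) (- (c / d)) (- \<gamma>))"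
  define X where "X = circulant m (cyclic_stencil m (2 * c / d + a) (- (c / d)) (- \<gamma> - a / m))"
  have G: "G = circulant m (\<lambda>s. - (real d / (2 * c * m)) * of_int s * (real m - of_int s))"
    unfolding G_def
    by (rule mat_dist_eq_circulant[where f = "\<lambda>t. - (real d / (2 * c * m)) * t * (real m - t)"])
       (simp add: algebra_simps)
  have "Ginv * G = 1\<^sub>m m"
    unfolding G Ginv_def \<gamma>_def
    by (rule circulant_stencil_mult_parabola[OF assms(1)]) (use assms(4) d in auto)
  then have "mat_inverse G = Some Ginv"
    using mat_mult_left_right_inverse[of Ginv m G]
    by (intro mat_inverse_eqI) (simp_all add: G Ginv_def)
  moreover have "Ginv + (a / m) \<cdot>\<^sub>m (real m \<cdot>\<^sub>m 1\<^sub>m m - J_mat m) = X"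
    unfolding Ginv_def X_def circulant_stencil_add_centering using assms(1) by simp
  moreover have "X * circ m mR = 1\<^sub>m m"
    unfolding X_def \<gamma>_def circ_eq_circulant
  proof (rule circulant_stencil_mult_chebU_pair[OF assms(1,3,4) d])
    show "q = a * real d / (2 * c) + 1" by (simp add: q_def)
    fix r :: int assume "0 \<le> r"
    then have "int (nat r + 1) = r + 1" by simp
    then show "mR (nat r + 1) = real d / (2 * c * (chebT m q - 1)) * chebU_pair m q r
                 - (12 * c + a * real d * (real m ^ 2 - 1)) / (12 * a * c * real m)"
      by (simp add: mR_def chebU_pair_def diff_diff_eq add.commute)
  qed
  then have "mat_inverse X = Some (circ m mR)"
    by (intro mat_inverse_eqI) (simp_all add: X_def circ_def)
  ultimately show ?thesis
    by auto
qed

end
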